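(* Assume $\alpha>\beta\ge1$ and let $(U,V,\Lambda)$ be the similarity profile. For all measurable $\rho,\zeta:\mathbb R\to(0,\infty)$ for which the integrals are defined, setting $\mathbf u=(\rho U,\zeta V)$, $$\mathcal I_{\Lambda,2}(\rho,\zeta)\le\theta\,\mathcal E_{\mathrm B}(\mathbf u|\mathbf U),\qquad\theta:=(\alpha-\beta)\|\Lambda/V\|_{L^\infty}.$$
   Context: Fix $d_1,d_2,k>0$, real stoichiometric coefficients $\alpha,\beta\ge1$ and $A_-,A_+>0$. The similarity profile is a triple $(U,V,\Lambda)$ with $U,V\in\mathrm C^2(\mathbb R)$ positive, bounded and bounded away from $0$, $\Lambda:\mathbb R\to\mathbb R$, satisfying $d_1U''+\tfrac y2U'+\alpha\Lambda=0$, $d_2V''+\tfrac y2V'-\beta\Lambda=0$, $U^\alpha=V^\beta$ on $\mathbb R$, and $U(\pm\infty)=A_\pm^\beta$, $V(\pm\infty)=A_\pm^\alpha$; $\mathbf U=(U,V)$. $\lambda_{\mathrm B}(z)=z\log z-z+1$; $\mathcal E_{\mathrm B}(\mathbf u|\mathbf U)=\int_{\mathbb R}\big(\lambda_{\mathrm B}(\rho)U+\lambda_{\mathrm B}(\zeta)V\big)\mathrm dy$ with $\rho=u/U$, $\zeta=v/V$. Let $\Psi(r)=\alpha(r^{1/\alpha}-1)$ for $r\ge0$. The mixed term $\mathcal I_\Lambda(\rho,\zeta)=\int_{\mathbb R}\big((\zeta-1)\beta-(\rho-1)\alpha\big)\Lambda\,\mathrm dy$ is split as $\mathcal I_\Lambda=\mathcal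 I_{\Lambda,1}+\mathcal I_{\Lambda,2}$ with $\mathcal I_{\Lambda,1}(\rho,\zeta)=\int_{\mathbb R}\big(\Psi(\zeta^\beta)-\Psi(\rho^\alpha)\big)\Lambda\,\mathrm dy$ and $\mathcal I_{\Lambda,2}(\rho,\zeta)=\int_{\mathbb R}\Big(\big(\zeta-1-\tfrac1\beta\Psi(\zeta^\beta)\big)\beta-\big(\rho-1-\tfrac1\alpha\Psi(\rho^\alpha)\big)\alpha\Big)\Lambda\,\mathrm dy$. $\|\cdot\|_{L^\infty}$ is the supremum of the absolute value. *)

theory Defs
  imports "HOL-Analysis.Analysis"
begin

definition C2_real :: "(real \<Rightarrow> real) \<Rightarrow> bool" where
  "C2_real f \<longleftrightarrow> (\<exists>f' f''. (\<forall>y. (f has_real_derivative f' y) (at y)) \<and>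
      (\<forall>y. (f' has_real_derivative f'' y) (at y)) \<and> continuous_on UNIV f'')"

definition similarity_profile ::
  "real \<Rightarrow> real \<Rightarrow> real \<Rightarrow> real \<Rightarrow> real \<Rightarrow> real \<Rightarrow>
   (real \<Rightarrow> real) \<Rightarrow> (real \<Rightarrow> real) \<Rightarrow> (real \<Rightarrow> real) \<Rightarrow> bool" where
  "similarity_profile d1 d2 \<alpha> \<beta> Am Ap U V \<Lambda> \<longleftrightarrow>
     C2_real U \<and> C2_real V \<and>
     (\<forall>y. U y > 0) \<and> (\<forall>y. V y > 0) \<and>
     (\<exists>C. \<forall>y. U y \<le> C) \<and> (\<exists>C. \<forall>y. V y \<le> C) \<and>
     (\<exists>c>0. \<forall>y. c \<le> U y) \<and> (\<exists>c>0. \<forall>y. c \<le> V y) \<and>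
     (\<forall>y. d1 * deriv (deriv U) y + y / 2 * deriv U y + \<alpha> * \<Lambda> y = 0) \<and>
     (\<forall>y. d2 * deriv (deriv V) y + y / 2 * deriv V y - \<beta> * \<Lambda> y = 0) \<and>
     (\<forall>y. U y powr \<alpha> = V y powr \<beta>) \<and>
     (U \<longlongrightarrow> Am powr \<beta>) at_bot \<and> (U \<longlongrightarrow> Ap powr \<beta>) at_top \<and>
     (V \<longlongrightarrow> Am powr \<alpha>) at_bot \<and> (V \<longlongrightarrow> Ap powr \<alpha>) at_top"

definition lambdaB :: "real \<Rightarrow> real" where
  "lambdaB z = z * ln z - z + 1"

text \<open>Integrand of the relative Boltzmann entropy E_B(u|U) with rho = u/U, zeta = v/V.\<close>
definition EB_integrand ::
  "(real \<Rightarrow> real) \<Rightarrow> (real \<Rightarrow> real) \<Rightarrow> (real \<Rightarrow> real) \<Rightarrow> (real \<Rightarrow> real) \<Rightarrow> real \<Rightarrow> real" where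
  "EB_integrand U V \<rho> \<zeta> y = lambdaB (\<rho> y) * U y + lambdaB (\<zeta> y) * V y"

definition EB ::
  "(real \<Rightarrow> real) \<Rightarrow> (real \<Rightarrow> real) \<Rightarrow> (real \<Rightarrow> real) \<Rightarrow> (real \<Rightarrow> real) \<Rightarrow> real" where
  "EB U V \<rho> \<zeta> = integral\<^sup>L lborel (EB_integrand U V \<rho> \<zeta>)"

definition Psi :: "real \<Rightarrow> real \<Rightarrow> real" where
  "Psi \<alpha> r = \<alpha> * (r powr (1 / \<alpha>) - 1)"

definition I2_integrand ::
  "real \<Rightarrow> real \<Rightarrow> (real \<Rightarrow> real) \<Rightarrow> (real \<Rightarrow> real) \<Rightarrow> (real \<Rightarrow> real) \<Rightarrow> real \<Rightarrow> real" where
  "I2_integrand \<alpha> \<beta> \<Lambda> \<rho> \<zeta> y =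
     ((\<zeta> y - 1 - Psi \<alpha> (\<zeta> y powr \<beta>) / \<beta>) * \<beta>
      - (\<rho> y - 1 - Psi \<alpha> (\<rho> y powr \<alpha>) / \<alpha>) * \<alpha>) * \<Lambda> y"

definition I_Lambda2 ::
  "real \<Rightarrow> real \<Rightarrow> (real \<Rightarrow> real) \<Rightarrow> (real \<Rightarrow> real) \<Rightarrow> (real \<Rightarrow> real) \<Rightarrow> real" where
  "I_Lambda2 \<alpha> \<beta> \<Lambda> \<rho> \<zeta> = integral\<^sup>L lborel (I2_integrand \<alpha> \<beta> \<Lambda> \<rho> \<zeta>)"

definition sup_norm :: "(real \<Rightarrow> real) \<Rightarrow> real" where
  "sup_norm f = (SUP y. \<bar>f y\<bar>)"

end

theory Submission
  imports Defs
begin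

text \<open>The inequality holds pointwise in \<open>y\<close>; only positivity of \<open>U\<close> and \<open>V\<close> is needed.
  Since \<open>\<Psi>(\<rho>\<^sup>\<alpha>) = \<alpha>(\<rho> - 1)\<close>, the \<open>\<rho>\<close>-part of the integrand vanishes and the
  \<open>\<zeta>\<close>-part is \<open>g(\<zeta>) \<Lambda>\<close> with \<open>g(z) = \<beta>(z - 1) - \<alpha>(z\<^bsup>\<beta>/\<alpha>\<^esup> - 1)\<close>. Concavity of
  \<open>z \<mapsto> z\<^bsup>\<beta>/\<alpha>\<^esup>\<close> gives \<open>g \<ge> 0\<close>, and \<open>exp x \<ge> 1 + x\<close> at \<open>x = (\<beta>/\<alpha> - 1) ln z\<close> gives
  \<open>g(z) \<le> (\<alpha> - \<beta>) \<lambda>\<^sub>B(z)\<close>. Hence \<open>g(\<zeta>) \<Lambda> \<le> (\<alpha> - \<beta>) \<parallel>\<Lambda>/V\<parallel>\<^sub>\<infinity> \<lambda>\<^sub>B(\<zeta>) V\<close>, and adding the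
  nonnegative term \<open>\<lambda>\<^sub>B(\<rho>) U\<close> yields the entropy density.\<close>

lemma lambdaB_nonneg:
  assumes "z > 0"
  shows "lambdaB z \<ge> 0"
proof -
  have "ln (1/z) \<le> 1/z - 1" using assms by (intro ln_le_minus_one) auto
  hence "z * (- ln z) \<le> z * (1/z - 1)" using assms by (intro mult_left_mono) (auto simp: ln_div)
  thus ?thesis using assms unfolding lambdaB_def by (simp add: algebra_simps)
qed

lemma power_gap_nonneg:
  fixes a b z :: real
  assumes "0 \<le> b" "b \<le> a" "0 < a" "0 < z"
  shows "0 \<le> b * (z - 1) - a * (z powr (b/a) - 1)"
proof -
  have "z powr (b/a) * 1 powr (1 - b/a) \<le> (b/a) * z + (1 - b/a) * 1"
    using assms by (intro Youngs_inequality_0) (auto simp: field_simps)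
  hence "a * z powr (b/a) \<le> a * ((b/a) * z + (1 - b/a))"
    using assms by (intro mult_left_mono) auto
  also have "\<dots> = b * z + a - b" using assms by (simp add: field_simps)
  finally show ?thesis by (simp add: algebra_simps)
qed

lemma power_gap_le_lambdaB:
  fixes a b z :: real
  assumes "0 < a" "0 < z"
  shows "b * (z - 1) - a * (z powr (b/a) - 1) \<le> (a - b) * lambdaB z"
proof -
  have "1 + (b/a - 1) * ln z \<le> z powr (b/a - 1)"
    using exp_ge_add_one_self[of "(b/a - 1) * ln z"] assms by (simp add: powr_def)
  hence "(a * z) * (1 + (b/a - 1) * ln z) \<le> (a * z) * z powr (b/a - 1)"
    using assms by (intro mult_left_mono) auto
  also have "(a * z) * z powr (b/a - 1) = a * z powr (b/a)"
    using assms by (simp add: powr_diff)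
  also have "(a * z) * (1 + (b/a - 1) * ln z) = a * z + (b - a) * z * ln z"
    using assms by (simp add: algebra_simps)
  finally show ?thesis unfolding lambdaB_def by (simp add: algebra_simps)
qed

lemma I2_integrand_eq:
  assumes "\<alpha> > 0" "\<beta> \<noteq> 0" "\<rho> y > 0" "\<zeta> y > 0"
  shows "I2_integrand \<alpha> \<beta> \<Lambda> \<rho> \<zeta> y
           = (\<beta> * (\<zeta> y - 1) - \<alpha> * (\<zeta> y powr (\<beta>/\<alpha>) - 1)) * \<Lambda> y"
proof -
  have \<rho>_part: "Psi \<alpha> (\<rho> y powr \<alpha>) = \<alpha> * (\<rho> y - 1)"
    using assms by (simp add: Psi_def powr_powr)
  have \<zeta>_part: "Psi \<alpha> (\<zeta> y powr \<beta>) = \<alpha> * (\<zeta> y powr (\<beta>/\<alpha>) - 1)"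
    using assms by (simp add: Psi_def powr_powr)
  show ?thesis
    unfolding I2_integrand_def \<rho>_part \<zeta>_part using assms by (simp add: field_simps)
qed

lemma I2_integrand_le_EB_integrand:
  assumes "\<alpha> > \<beta>" "\<beta> > 0" "\<rho> y > 0" "\<zeta> y > 0" "U y > 0" "V y > 0"
    and "\<bar>\<Lambda> y / V y\<bar> \<le> M"
  shows "I2_integrand \<alpha> \<beta> \<Lambda> \<rho> \<zeta> y \<le> ((\<alpha> - \<beta>) * M) * EB_integrand U V \<rho> \<zeta> y"
proof -
  define g where "g = \<beta> * (\<zeta> y - 1) - \<alpha> * (\<zeta> y powr (\<beta>/\<alpha>) - 1)"
  have g_nonneg: "0 \<le> g" and g_le: "g \<le> (\<alpha> - \<beta>) * lambdaB (\<zeta> y)"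
    unfolding g_def using assms power_gap_nonneg power_gap_le_lambdaB by auto
  have M_nonneg: "0 \<le> M" using assms(7) by linarith
  have "\<Lambda> y \<le> M * V y"
    using assms(6,7) by (simp add: abs_divide abs_of_pos pos_divide_le_eq)
  hence "g * \<Lambda> y \<le> g * (M * V y)" using g_nonneg by (rule mult_left_mono)
  also have "\<dots> \<le> ((\<alpha> - \<beta>) * lambdaB (\<zeta> y)) * (M * V y)"
    using g_le M_nonneg assms(6) by (intro mult_right_mono) auto
  also have "\<dots> = ((\<alpha> - \<beta>) * M) * (lambdaB (\<zeta> y) * V y)" by (simp add: algebra_simps)
  also have "\<dots> \<le> ((\<alpha> - \<beta>) * M) * (lambdaB (\<rho> y) * U y + lambdaB (\<zeta> y) * V y)"
    using lambdaB_nonneg[OF assms(3)] M_nonneg assms(1,5) by (intro mult_left_mono) auto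
  finally show ?thesis
    using I2_integrand_eq[of \<alpha> \<beta> \<rho> y \<zeta> \<Lambda>] assms
    by (simp add: g_def EB_integrand_def)
qed

lemma abs_le_sup_norm:
  assumes "bdd_above (range (\<lambda>y. \<bar>f y\<bar>))"
  shows "\<bar>f y\<bar> \<le> sup_norm f"
  unfolding sup_norm_def by (rule cSUP_upper[OF _ assms]) auto

theorem mainTheorem15:
  fixes d1 d2 k \<alpha> \<beta> Am Ap :: real
    and U V \<Lambda> \<rho> \<zeta> :: "real \<Rightarrow> real"
  assumes "d1 > 0" "d2 > 0" "k > 0"
    and "\<alpha> > \<beta>" "\<beta> \<ge> 1"
    and "Am > 0" "Ap > 0"
    and "similarity_profile d1 d2 \<alpha> \<beta> Am Ap U V \<Lambda>"
    and "bdd_above (range (\<lambda>y. \<bar>\<Lambda> y / V y\<bar>))"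
    and "\<rho> \<in> borel_measurable lborel" "\<zeta> \<in> borel_measurable lborel"
    and "\<forall>y. \<rho> y > 0" "\<forall>y. \<zeta> y > 0"
    and "integrable lborel (I2_integrand \<alpha> \<beta> \<Lambda> \<rho> \<zeta>)"
    and "integrable lborel (EB_integrand U V \<rho> \<zeta>)"
  shows "I_Lambda2 \<alpha> \<beta> \<Lambda> \<rho> \<zeta>
           \<le> ((\<alpha> - \<beta>) * sup_norm (\<lambda>y. \<Lambda> y / V y)) * EB U V \<rho> \<zeta>"
proof -
  let ?\<theta> = "(\<alpha> - \<beta>) * sup_norm (\<lambda>y. \<Lambda> y / V y)"
  have "\<forall>y. U y > 0" "\<forall>y. V y > 0"
    using assms(8) unfolding similarity_profile_def by auto
  hence pointwise: "I2_integrand \<alpha> \<beta> \<Lambda> \<rho> \<zeta> y \<le> ?\<theta> * EB_integrand U V \<rho> \<zeta> y" for y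
    using assms(4,5,12,13) abs_le_sup_norm[OF assms(9), of y]
    by (intro I2_integrand_le_EB_integrand) auto
  have "I_Lambda2 \<alpha> \<beta> \<Lambda> \<rho> \<zeta> \<le> integral\<^sup>L lborel (\<lambda>y. ?\<theta> * EB_integrand U V \<rho> \<zeta> y)"
    unfolding I_Lambda2_def using assms(14,15) pointwise by (intro integral_mono) auto
  also have "\<dots> = ?\<theta> * EB U V \<rho> \<zeta>" unfolding EB_def by simp
  finally show ?thesis .
qed

end
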